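(* Let $n\geq 2$ and consider the clustered graph of overlapping $n$-permutations. For every cluster $Y$ there exists a unique cluster $X$ such that there are exactly two (parallel) edges from $X$ to $Y$.
   Context: An $n$-permutation is a permutation $\pi_1\cdots\pi_n$ of $\{1,\ldots,n\}$. For a word $w$ of distinct numbers, $\mathrm{red}(w)$ is the permutation obtained by replacing the $i$-th smallest letter by $i$. For an $(n-1)$-permutation $\tau$, the cluster with signature $\tau$ is the set of all $n$-permutations $\pi$ with $\mathrm{red}(\pi_1\cdots\pi_{n-1})=\tau$. The clustered graph of overlapping $n$-permutations is the directed multigraph (loops allowed) whose vertices are the $(n-1)!$ clusters and in which every $n$-permutation $\pi$ contributes exactly one edge, going from the cluster containing $\pi$ to the cluster with signature $\mathrm{red}(\pi_2\cdots\pi_n)$. *)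

theory Defs
  imports Main
begin

definition perms :: "nat \<Rightarrow> nat list set" where
  "perms n = {p. distinct p \<and> set p = {1..n}}"

definition red :: "nat list \<Rightarrow> nat list" where
  "red w = map (\<lambda>x. card {y \<in> set w. y \<le> x}) w"

definition cluster :: "nat \<Rightarrow> nat list \<Rightarrow> nat list set" where
  "cluster n \<tau> = {\<pi> \<in> perms n. red (butlast \<pi>) = \<tau>}"

definition clusters :: "nat \<Rightarrow> nat list set set" where
  "clusters n = cluster n ` perms (n - 1)"

text \<open>Edge contributed by pi: from the cluster containing pi to the cluster
  with signature red(pi_2 ... pi_n).\<close>
definition edge_src :: "nat \<Rightarrow> nat list \<Rightarrow> nat list set" where
  "edge_src n \<pi> = cluster n (red (butlast \<pi>))"

definition edge_tgt :: "nat \<Rightarrow> nat list \<Rightarrow> nat list set" where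
  "edge_tgt n \<pi> = cluster n (red (tl \<pi>))"

definition num_edges :: "nat \<Rightarrow> nat list set \<Rightarrow> nat list set \<Rightarrow> nat" where
  "num_edges n X Y = card {\<pi> \<in> perms n. edge_src n \<pi> = X \<and> edge_tgt n \<pi> = Y}"

end

theory Submission
  imports Defs
begin

text \<open>Write n = m + 1 and let t be the signature of the target cluster Y. The n-permutations
  pi with red(pi_2 ... pi_n) = t are exactly the words a # t' with a in {1..n}, where t' arises
  from t by raising every letter >= a by one. So the edges into Y are indexed by their first
  letter a, and the source of edge a has signature f(a) = red(a # butlast t'). If c is the
  last letter of t, the first letter of f(a) is a for a <= c and a - 1 for a > c, so f is
  injective apart from f(c) = f(c + 1). Hence the cluster with signature f(c) is the unique
  source of exactly two edges into Y.\<close>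

definition skip :: "nat \<Rightarrow> nat \<Rightarrow> nat" where
  "skip a x = (if x < a then x else Suc x)"

definition cons_perm :: "nat \<Rightarrow> nat list \<Rightarrow> nat list" where
  "cons_perm a t = a # map (skip a) t"

lemma strict_mono_skip: "strict_mono (skip a)"
  by (rule strict_monoI) (auto simp: skip_def)

lemma image_skip_atLeastAtMost:
  assumes "a \<in> {1..Suc m}"
  shows "skip a ` {1..m} = {1..Suc m} - {a}"
proof (rule set_eqI, rule iffI)
  fix y assume "y \<in> {1..Suc m} - {a}"
  then have "y < a \<and> y \<in> {1..m} \<and> skip a y = y \<or> y - 1 \<in> {1..m} \<and> skip a (y - 1) = y"
    using assms by (auto simp: skip_def)
  then show "y \<in> skip a ` {1..m}"
    by (metis imageI)
qed (use assms in \<open>auto simp: skip_def\<close>)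

lemma length_perms: "p \<in> perms n \<Longrightarrow> length p = n"
  unfolding perms_def using distinct_card by fastforce

lemma set_butlast_distinct:
  assumes "distinct xs" "xs \<noteq> []"
  shows "set (butlast xs) = set xs - {last xs}"
proof -
  have xs: "xs = butlast xs @ [last xs]"
    using assms(2) by simp
  then have "last xs \<notin> set (butlast xs)"
    using assms(1) by (metis distinct_append disjoint_iff list.set_intros(1))
  moreover have "set xs = insert (last xs) (set (butlast xs))"
    by (subst xs) simp
  ultimately show ?thesis
    by auto
qed

lemma red_map_strict_mono:
  assumes "strict_mono_on (set w) h"
  shows "red (map h w) = red w"
  unfolding red_def
proof (simp only: map_map o_def set_map, rule map_cong[OF refl])
  fix x assume x: "x \<in> set w"
  have "{y \<in> h ` set w. y \<le> h x} = h ` {y \<in> set w. y \<le> x}"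
    using strict_mono_on_less_eq[OF assms _ x] x by auto
  moreover have "inj_on h {y \<in> set w. y \<le> x}"
    using strict_mono_on_imp_inj_on[OF assms] by (rule inj_on_subset) auto
  ultimately show "card {y \<in> h ` set w. y \<le> h x} = card {y \<in> set w. y \<le> x}"
    by (simp add: card_image)
qed

lemma red_perm:
  assumes "t \<in> perms m"
  shows "red t = t"
proof -
  have "card {y \<in> set t. y \<le> x} = x" if "x \<in> set t" for x
  proof -
    have "{y \<in> set t. y \<le> x} = {1..x}"
      using assms that by (auto simp: perms_def)
    then show ?thesis
      by simp
  qed
  then show ?thesis
    unfolding red_def by (simp add: map_idI)
qed

lemma red_in_perms:
  assumes "distinct w"
  shows "red w \<in> perms (length w)"
proof -
  define k where "k = length w"
  define r where "r x = card {y \<in> set w. y \<le> x}" for x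
  have card_w: "card (set w) = k"
    using assms by (simp add: distinct_card k_def)
  have mono: "strict_mono_on (set w) r"
  proof (rule strict_mono_onI)
    fix x x' assume x: "x \<in> set w" "x' \<in> set w" "x < x'"
    then have "{y \<in> set w. y \<le> x} \<subset> {y \<in> set w. y \<le> x'}"
      by (auto intro!: psubsetI) (metis (lifting) mem_Collect_eq not_le order_refl)
    then show "r x < r x'"
      unfolding r_def by (rule psubset_card_mono[rotated]) simp
  qed
  have "r x \<in> {1..k}" if "x \<in> set w" for x
  proof -
    have "{y \<in> set w. y \<le> x} \<noteq> {}"
      using that by auto
    then have "1 \<le> r x"
      unfolding r_def by (simp add: Suc_leI card_gt_0_iff)
    moreover have "r x \<le> card (set w)"
      unfolding r_def by (rule card_mono) auto
    ultimately show ?thesis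
      using card_w by simp
  qed
  moreover have "card (r ` set w) = k"
    using strict_mono_on_imp_inj_on[OF mono] card_w by (simp add: card_image)
  ultimately have "r ` set w = {1..k}"
    by (intro card_subset_eq) auto
  moreover have "distinct (map r w)"
    using assms strict_mono_on_imp_inj_on[OF mono] by (simp add: distinct_map)
  ultimately show ?thesis
    unfolding perms_def red_def k_def[symmetric] r_def[symmetric] by simp
qed

lemma red_butlast_in_perms: "p \<in> perms (Suc m) \<Longrightarrow> red (butlast p) \<in> perms m"
  using red_in_perms[of "butlast p"] length_perms[of p] by (simp add: perms_def distinct_butlast)

lemma red_tl_in_perms: "p \<in> perms (Suc m) \<Longrightarrow> red (tl p) \<in> perms m"
  using red_in_perms[of "tl p"] length_perms[of p] by (simp add: perms_def distinct_tl)

lemma cluster_inj: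
  assumes "s \<in> perms m" "s' \<in> perms m" "cluster (Suc m) s = cluster (Suc m) s'"
  shows "s = s'"
proof -
  have "s @ [Suc m] \<in> cluster (Suc m) s"
    using assms(1) red_perm[OF assms(1)] by (auto simp: cluster_def perms_def)
  then have "s @ [Suc m] \<in> cluster (Suc m) s'"
    using assms(3) by simp
  then have "red s = s'"
    by (simp add: cluster_def)
  then show ?thesis
    using red_perm[OF assms(1)] by simp
qed

lemma cons_perm_in_perms:
  assumes t: "t \<in> perms m" and a: "a \<in> {1..Suc m}"
  shows "cons_perm a t \<in> perms (Suc m)"
proof -
  have "distinct (map (skip a) t)"
    using t strict_mono_on_imp_inj_on[OF strict_mono_skip]
    by (auto simp: perms_def distinct_map intro: inj_on_subset)
  moreover have "set (map (skip a) t) = {1..Suc m} - {a}"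
    using t image_skip_atLeastAtMost[OF a] by (simp add: perms_def)
  ultimately show ?thesis
    using a by (auto simp: cons_perm_def perms_def)
qed

lemma red_tl_cons_perm:
  assumes "t \<in> perms m"
  shows "red (tl (cons_perm a t)) = t"
proof -
  have "strict_mono_on (set t) (skip a)"
    using strict_mono_skip by (simp add: strict_mono_on_def strict_mono_def)
  then show ?thesis
    using red_map_strict_mono red_perm[OF assms] by (simp add: cons_perm_def)
qed

lemma perm_eq_cons_perm_red_tl:
  assumes p: "p \<in> perms (Suc m)"
  shows "p = cons_perm (hd p) (red (tl p))" "hd p \<in> {1..Suc m}"
proof -
  obtain a w where pw: "p = a # w"
    using length_perms[OF p] by (cases p) auto
  have a: "a \<in> {1..Suc m}" and w: "a \<notin> set w" "set w = {1..Suc m} - {a}"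
    using p pw by (auto simp: perms_def)
  have "skip a (card {y \<in> set w. y \<le> x}) = x" if x: "x \<in> set w" for x
  proof -
    have "x \<le> Suc m"
      using x w(2) by simp
    then have "{y \<in> set w. y \<le> x} = {1..x} - {a}"
      unfolding w(2) by (intro set_eqI) (simp, linarith)
    moreover have "x \<noteq> a"
      using x w(1) by auto
    ultimately show ?thesis
      using a by (cases "x < a") (simp_all add: skip_def card_Diff_singleton)
  qed
  then have "map (skip a) (red w) = w"
    unfolding red_def by (simp add: map_idI)
  then show "p = cons_perm (hd p) (red (tl p))"
    using pw by (simp add: cons_perm_def)
  show "hd p \<in> {1..Suc m}"
    using a pw by simp
qed

lemma num_edges_eq_card_first_letters:
  assumes s: "s \<in> perms m" and t: "t \<in> perms m"
  shows "num_edges (Suc m) (cluster (Suc m) s) (cluster (Suc m) t)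
         = card {a \<in> {1..Suc m}. red (butlast (cons_perm a t)) = s}"
proof -
  have "{p \<in> perms (Suc m). edge_src (Suc m) p = cluster (Suc m) s \<and>
                              edge_tgt (Suc m) p = cluster (Suc m) t}
      = {p \<in> perms (Suc m). red (butlast p) = s \<and> red (tl p) = t}"
    using cluster_inj[OF red_butlast_in_perms s] cluster_inj[OF red_tl_in_perms t]
    unfolding edge_src_def edge_tgt_def by blast
  also have "\<dots> = (\<lambda>a. cons_perm a t) ` {a \<in> {1..Suc m}. red (butlast (cons_perm a t)) = s}"
  proof (rule set_eqI, rule iffI)
    fix p assume "p \<in> {p \<in> perms (Suc m). red (butlast p) = s \<and> red (tl p) = t}"
    then have p: "p \<in> perms (Suc m)" "red (butlast p) = s" "red (tl p) = t"
      by auto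
    then have "p = cons_perm (hd p) t" "hd p \<in> {1..Suc m}"
      using perm_eq_cons_perm_red_tl[OF p(1)] by simp_all
    then show "p \<in> (\<lambda>a. cons_perm a t) ` {a \<in> {1..Suc m}. red (butlast (cons_perm a t)) = s}"
      using p(2) by (intro image_eqI[of _ _ "hd p"]) auto
  qed (use cons_perm_in_perms[OF t] red_tl_cons_perm[OF t] in auto)
  finally show ?thesis
    unfolding num_edges_def by (simp add: card_image inj_on_def cons_perm_def)
qed

lemma hd_red_butlast_cons_perm:
  assumes t: "t \<in> perms m" "t \<noteq> []" and a: "a \<in> {1..Suc m}"
  shows "hd (red (butlast (cons_perm a t))) = (if a \<le> last t then a else a - 1)"
proof -
  let ?q = "cons_perm a t"
  have c: "last t \<in> {1..m}"
    using t by (auto simp: perms_def)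
  have q: "set (butlast ?q) = {1..Suc m} - {skip a (last t)}"
    using set_butlast_distinct[of ?q] cons_perm_in_perms[OF t(1) a] t(2)
    by (simp add: perms_def cons_perm_def last_map)
  have "hd (red (butlast ?q)) = card {y \<in> set (butlast ?q). y \<le> a}"
    using t(2) by (simp add: red_def cons_perm_def)
  also have "\<dots> = (if a \<le> last t then a else a - 1)"
  proof (cases "a \<le> last t")
    case True
    then have "{y \<in> set (butlast ?q). y \<le> a} = {1..a}"
      unfolding q using a by (auto simp: skip_def)
    then show ?thesis
      using True by simp
  next
    case False
    then have "{y \<in> set (butlast ?q). y \<le> a} = {1..a} - {last t}"
      unfolding q using a by (auto simp: skip_def)
    then show ?thesis
      using False c by (simp add: card_Diff_singleton)
  qed
  finally show ?thesis .
qed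

text \<open>Swapping the adjacent values c and c + 1, which sit at the two ends of the word, does
  not change the relative order of the first m letters.\<close>

lemma red_butlast_cons_perm_last_Suc:
  assumes t: "t \<in> perms m" "t \<noteq> []"
  shows "red (butlast (cons_perm (Suc (last t)) t)) = red (butlast (cons_perm (last t) t))"
proof -
  define c where "c = last t"
  have tc: "t = butlast t @ [c]"
    using t(2) by (simp add: c_def)
  have c: "c \<notin> set (butlast t)"
    using t(1) tc by (metis distinct_append perms_def mem_Collect_eq disjoint_iff list.set_intros(1))
  define L where "L = map (skip c) (butlast t)"
  have "map (skip (Suc c)) (butlast t) = L"
    unfolding L_def using c by (auto simp: skip_def) (metis less_SucE)
  then have q: "butlast (cons_perm c t) = c # L" "butlast (cons_perm (Suc c) t) = Suc c # L"
    by (subst tc, simp add: cons_perm_def L_def butlast_append)+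
  have L: "c \<notin> set L" "Suc c \<notin> set L"
    using c by (auto simp: L_def skip_def)
  define h where "h x = (if x = c then Suc c else x)" for x
  have "map h (c # L) = Suc c # L"
    using L unfolding h_def by (simp, intro map_idI) auto
  moreover have "strict_mono_on (set (c # L)) h"
  proof (rule strict_mono_onI)
    fix x y assume xy: "x \<in> set (c # L)" "y \<in> set (c # L)" "x < y"
    then have "x = c \<Longrightarrow> Suc c < y"
      using L by (metis Suc_lessI set_ConsD order_less_irrefl)
    then show "h x < h y"
      using xy by (auto simp: h_def)
  qed
  ultimately have "red (Suc c # L) = red (c # L)"
    by (metis red_map_strict_mono)
  then show ?thesis
    using q c_def by simp
qed

lemma red_butlast_cons_perm_eq_iff:
  assumes t: "t \<in> perms m" "t \<noteq> []"
    and a: "a \<in> {1..Suc m}" and a': "a' \<in> {1..Suc m}" and "a < a'"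
  shows "red (butlast (cons_perm a t)) = red (butlast (cons_perm a' t))
         \<longleftrightarrow> a = last t \<and> a' = Suc (last t)"
proof
  assume "red (butlast (cons_perm a t)) = red (butlast (cons_perm a' t))"
  then have "(if a \<le> last t then a else a - 1) = (if a' \<le> last t then a' else a' - 1)"
    using hd_red_butlast_cons_perm[OF t a] hd_red_butlast_cons_perm[OF t a'] by simp
  then show "a = last t \<and> a' = Suc (last t)"
    using a a' \<open>a < a'\<close> by (auto split: if_splits)
qed (use red_butlast_cons_perm_last_Suc[OF t] in simp)

lemma card_sources_eq_2_iff:
  assumes t: "t \<in> perms m" "t \<noteq> []"
  shows "card {a \<in> {1..Suc m}. red (butlast (cons_perm a t)) = s} = 2
         \<longleftrightarrow> s = red (butlast (cons_perm (last t) t))"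
proof -
  define f where "f a = red (butlast (cons_perm a t))" for a
  have c: "last t \<in> {1..m}"
    using t by (auto simp: perms_def)
  have collide: "f a = f a' \<longleftrightarrow> a = last t \<and> a' = Suc (last t)"
    if "a \<in> {1..Suc m}" "a' \<in> {1..Suc m}" "a < a'" for a a'
    using red_butlast_cons_perm_eq_iff[OF t that] by (simp add: f_def)
  have "card {a \<in> {1..Suc m}. f a = s} = 2 \<longleftrightarrow> s = f (last t)"
  proof
    assume "card {a \<in> {1..Suc m}. f a = s} = 2"
    then obtain a a' where aa': "{a \<in> {1..Suc m}. f a = s} = {a, a'}" "a < a'"
      by (auto simp: card_2_iff) (metis insert_commute linorder_neqE_nat)
    then have "a \<in> {1..Suc m}" "a' \<in> {1..Suc m}" "f a = s" "f a' = s"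
      by blast+
    then show "s = f (last t)"
      using collide[of a a'] aa'(2) by simp
  next
    assume s: "s = f (last t)"
    have "{a \<in> {1..Suc m}. f a = s} = {last t, Suc (last t)}"
    proof (rule set_eqI, rule iffI)
      fix a assume "a \<in> {a \<in> {1..Suc m}. f a = s}"
      then show "a \<in> {last t, Suc (last t)}"
        using collide[of a "last t"] collide[of "last t" a] c s
        by (cases a "last t" rule: linorder_cases) auto
    qed (use c s collide[of "last t" "Suc (last t)"] in auto)
    then show "card {a \<in> {1..Suc m}. f a = s} = 2"
      by simp
  qed
  then show ?thesis
    by (simp add: f_def)
qed

theorem lemma3:
  fixes n :: nat and Y :: "nat list set"
  assumes "n \<ge> 2" and "Y \<in> clusters n"
  shows "\<exists>!X. X \<in> clusters n \<and> num_edges n X Y = 2"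
proof -
  obtain m where n: "n = Suc m" and "m \<ge> 1"
    using assms(1) by (metis Suc_le_D Suc_le_mono one_add_one plus_1_eq_Suc)
  obtain t where t: "t \<in> perms m" and Y: "Y = cluster n t"
    using assms(2) n by (auto simp: clusters_def)
  have "t \<noteq> []"
    using length_perms[OF t] \<open>m \<ge> 1\<close> by auto
  define s where "s = red (butlast (cons_perm (last t) t))"
  have "last t \<in> {1..Suc m}"
    using t \<open>t \<noteq> []\<close> last_in_set by (fastforce simp: perms_def)
  then have s_perm: "s \<in> perms m"
    unfolding s_def by (intro red_butlast_in_perms cons_perm_in_perms[OF t])
  have edges: "num_edges n (cluster n s') Y = 2 \<longleftrightarrow> s' = s" if "s' \<in> perms m" for s'
    using num_edges_eq_card_first_letters[OF that t] card_sources_eq_2_iff[OF t \<open>t \<noteq> []\<close>]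
    by (simp add: n Y s_def)
  show ?thesis
  proof (rule ex1I[of _ "cluster n s"])
    show "cluster n s \<in> clusters n \<and> num_edges n (cluster n s) Y = 2"
      using s_perm edges[OF s_perm] by (simp add: clusters_def n)
  next
    fix X assume "X \<in> clusters n \<and> num_edges n X Y = 2"
    then show "X = cluster n s"
      using edges by (auto simp: clusters_def n)
  qed
qed

end
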